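(* Let $\mu$ be a boundedly supported Borel probability measure on $\mathbb{R}$ and let $q_0>1$ be such that $\alpha_0=\tau_\mu'(q_0)$ exists. For every $\kappa>0$ there is $\varepsilon=\varepsilon(\kappa,q_0)>0$ such that for all sufficiently large $m$: if $\mathcal{D}'\subset\mathcal{D}_m$ has at most $2^{(\tau_\mu^*(\alpha_0)-\kappa)m}$ elements, then \[ \sum_{J\in\mathcal{D}'}\mu(J)^{q_0}\le 2^{-(\tau_\mu(q_0)+\varepsilon)m}. \]
   Context: Logs base 2. $\mathcal{D}_m=\{[j2^{-m},(j+1)2^{-m}):j\in\mathbb{Z}\}$. For $q>0$, $\tau_\mu(q)=\liminf_{m\to\infty}-\frac1m\log\sum_{J\in\mathcal{D}_m,\mu(J)>0}\mu(J)^q$, and $\tau_\mu^*(\alpha)=\inf_{q>0}(\alpha q-\tau_\mu(q))$. *)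

theory Defs
  imports "HOL-Probability.Probability"
begin

definition dyadic :: "nat \<Rightarrow> int \<Rightarrow> real set" where
  "dyadic m j = {real_of_int j * 2 powr (- real m) ..< (real_of_int j + 1) * 2 powr (- real m)}"

definition dyadics :: "nat \<Rightarrow> real set set" where
  "dyadics m = range (dyadic m)"

definition moment_sum :: "real measure \<Rightarrow> real \<Rightarrow> nat \<Rightarrow> real" where
  "moment_sum \<mu> q m = (\<Sum>J\<in>{J\<in>dyadics m. measure \<mu> J > 0}. measure \<mu> J powr q)"

definition tau :: "real measure \<Rightarrow> real \<Rightarrow> real" where
  "tau \<mu> q = real_of_ereal (liminf (\<lambda>m. ereal (- (1 / real m) * log 2 (moment_sum \<mu> q m))))"

definition tau_star :: "real measure \<Rightarrow> real \<Rightarrow> real" where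
  "tau_star \<mu> \<alpha> = (INF q\<in>{0<..}. \<alpha> * q - tau \<mu> q)"

end

theory Submission
  imports Defs
begin

text \<open>
  Split the sum over \<open>D'\<close> at the mass threshold \<open>2^{-am}\<close>, with \<open>a = \<alpha>\<^sub>0 - \<eta>\<close> slightly
  below \<open>\<alpha>\<^sub>0\<close>. Light intervals contribute at most \<open>#D' 2^{-a q\<^sub>0 m}\<close>, which is small because
  \<open>\<tau>\<^sup>*(\<alpha>\<^sub>0) \<le> \<alpha>\<^sub>0 q\<^sub>0 - \<tau>(q\<^sub>0)\<close>; this Legendre bound holds since \<open>\<tau>\<close> is concave on
  \<open>[1,\<infinity>)\<close> (Hoelder's inequality for the moment sums) and hence lies below its tangent at
  \<open>q\<^sub>0\<close>. Heavy intervals satisfy \<open>\<mu>(J)^{q\<^sub>0} \<le> 2^{ahm} \<mu>(J)^p\<close> with \<open>p = q\<^sub>0 + h\<close>, so they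
  contribute at most \<open>2^{ahm}\<close> times the \<open>p\<close>-th moment sum, roughly \<open>2^{(ah - \<tau>(p))m}\<close>; as
  \<open>\<tau>(p) - \<tau>(q\<^sub>0) \<approx> \<alpha>\<^sub>0 h > a h\<close> for small \<open>h > 0\<close>, this too is exponentially smaller
  than \<open>2^{-\<tau>(q\<^sub>0) m}\<close>.
\<close>

section \<open>Dyadic intervals\<close>

lemma dyadic_eq: "dyadic m j = {real_of_int j / 2^m ..< (real_of_int j + 1) / 2^m}"
  unfolding dyadic_def by (simp add: powr_minus_divide powr_realpow)

lemma disjoint_dyadic:
  assumes "j \<noteq> k" shows "dyadic m j \<inter> dyadic m k = {}"
proof -
  have "dyadic m a \<inter> dyadic m b = {}" if "a < b" for a b
  proof -
    from that have "(real_of_int a + 1) / 2^m \<le> real_of_int b / 2^m"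
      by (intro divide_right_mono) auto
    then show ?thesis unfolding dyadic_eq by auto
  qed
  then show ?thesis using assms by (metis Int_commute linorder_neqE)
qed

lemma mem_dyadic_floor: "x \<in> dyadic m \<lfloor>x * 2^m\<rfloor>"
proof -
  have "real_of_int \<lfloor>x * 2^m\<rfloor> \<le> x * 2^m" "x * 2^m < real_of_int \<lfloor>x * 2^m\<rfloor> + 1"
    by linarith+
  then show ?thesis unfolding dyadic_eq by (simp add: field_simps)
qed

lemma inj_dyadic: "inj (dyadic m)"
proof (rule injI)
  fix j k assume "dyadic m j = dyadic m k"
  moreover have "dyadic m j \<noteq> {}"
    unfolding dyadic_eq by (auto simp: divide_strict_right_mono)
  ultimately show "j = k" using disjoint_dyadic by fastforce
qed

lemma dyadic_index_bounds:
  assumes "x \<in> dyadic m j" "\<bar>x\<bar> \<le> R"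
  shows "j \<in> {\<lfloor>-R * 2^m\<rfloor> .. \<lfloor>R * 2^m\<rfloor>}"
proof -
  from assms(1) have "real_of_int j \<le> x * 2^m" "x * 2^m < real_of_int j + 1"
    unfolding dyadic_eq by (simp_all add: field_simps)
  moreover have "-R * 2^m \<le> x * 2^m" "x * 2^m \<le> R * 2^m"
    using assms(2) by (intro mult_right_mono; simp)+
  ultimately have "real_of_int j \<le> R * 2^m" "-R * 2^m < real_of_int j + 1"
    by linarith+
  then show ?thesis by (simp; linarith)
qed

lemma sum_powr_log_convex:
  fixes a :: "'i \<Rightarrow> real"
  assumes "finite I" "I \<noteq> {}" "\<And>i. i \<in> I \<Longrightarrow> a i > 0"
    and "r \<ge> 0" "s \<ge> 0" "r + s = 1"
  shows "(\<Sum>i\<in>I. a i powr (r*x + s*y)) \<le> (\<Sum>i\<in>I. a i powr x) powr r * (\<Sum>i\<in>I. a i powr y) powr s"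
proof -
  define A B where "A = (\<Sum>i\<in>I. a i powr x)" and "B = (\<Sum>i\<in>I. a i powr y)"
  have "A > 0" "B > 0" unfolding A_def B_def using assms(1,2) by (auto intro!: sum_pos) (use assms(3) in fastforce)+
  \<comment> \<open>Young's inequality applied termwise to the normalised summands\<close>
  have "a i powr (r*x + s*y) \<le> A powr r * B powr s * (r * (a i powr x / A) + s * (a i powr y / B))"
    if "i \<in> I" for i
  proof -
    have "a i powr (r*x + s*y) = A powr r * B powr s * ((a i powr x / A) powr r * (a i powr y / B) powr s)"
      using \<open>A > 0\<close> \<open>B > 0\<close> assms(3)[OF that]
      by (simp add: powr_add powr_powr powr_divide mult.commute)
    also have "\<dots> \<le> A powr r * B powr s * (r * (a i powr x / A) + s * (a i powr y / B))"
      using \<open>A > 0\<close> \<open>B > 0\<close> assms(3)[OF that] assms(4-6) by (intro mult_left_mono Youngs_inequality_0) auto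
    finally show ?thesis .
  qed
  then have "(\<Sum>i\<in>I. a i powr (r*x + s*y))
      \<le> (\<Sum>i\<in>I. A powr r * B powr s * (r * (a i powr x / A) + s * (a i powr y / B)))"
    by (rule sum_mono)
  also have "\<dots> = A powr r * B powr s * (r * ((\<Sum>i\<in>I. a i powr x) / A) + s * ((\<Sum>i\<in>I. a i powr y) / B))"
    by (simp only: sum_distrib_left[symmetric] sum.distrib sum_divide_distrib)
  finally show ?thesis using \<open>A > 0\<close> \<open>B > 0\<close> assms(6) unfolding A_def B_def by simp
qed

lemma sum_powr_split_at_threshold:
  fixes w :: "'a \<Rightarrow> real"
  assumes "finite D" "\<And>J. w J \<ge> 0" "t > 0" "q \<ge> 0" "h \<ge> 0"
  shows "(\<Sum>J\<in>D. w J powr q) \<le> card D * t powr q + t powr (-h) * (\<Sum>J\<in>{J\<in>D. w J > 0}. w J powr (q + h))"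
proof -
  define g where "g J = (if w J > 0 then w J powr (q + h) else 0)" for J
  have "w J powr q \<le> t powr q + t powr (-h) * g J" for J
  proof (cases "w J \<le> t")
    case True
    then have "w J powr q \<le> t powr q" using assms by (intro powr_mono2) auto
    then show ?thesis unfolding g_def by (simp add: add_increasing2)
  next
    case False
    then have "w J powr q = w J powr (q + h) * w J powr (-h)" using assms(3) by (simp add: powr_add[symmetric])
    also have "\<dots> \<le> w J powr (q + h) * t powr (-h)"
      using False assms by (intro mult_left_mono powr_mono2') auto
    finally show ?thesis using False assms(3) unfolding g_def by (simp add: add_increasing mult.commute)
  qed
  then have "(\<Sum>J\<in>D. w J powr q) \<le> (\<Sum>J\<in>D. t powr q + t powr (-h) * g J)"
    by (rule sum_mono)
  also have "\<dots> = card D * t powr q + t powr (-h) * (\<Sum>J\<in>{J\<in>D. w J > 0}. w J powr (q + h))"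
    using assms(1) by (simp add: sum.distrib sum_distrib_left sum.inter_filter g_def)
  finally show ?thesis .
qed

lemma two_powr_add_le:
  fixes x y z e m :: real
  assumes "x \<le> z - e" "y \<le> z - e" "1 \<le> e * m" "m \<ge> 0"
  shows "2 powr (x * m) + 2 powr (y * m) \<le> 2 powr (z * m)"
proof -
  have "2 powr (x * m) \<le> 2 powr ((z - e) * m)" "2 powr (y * m) \<le> 2 powr ((z - e) * m)"
    using assms by (intro powr_mono mult_right_mono; simp)+
  then have "2 powr (x * m) + 2 powr (y * m) \<le> 2 * 2 powr ((z - e) * m)" by linarith
  also have "\<dots> = 2 powr (1 + (z - e) * m)" by (simp add: powr_add)
  also have "\<dots> = 2 powr (1 + z * m - e * m)" by (simp add: algebra_simps)
  also have "\<dots> \<le> 2 powr (z * m)" using assms(3) by simp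
  finally show ?thesis .
qed

lemma DERIV_exists_secant_above:
  fixes f :: "real \<Rightarrow> real"
  assumes "(f has_real_derivative D) (at x)" "c < D"
  shows "\<exists>y>x. f y - f x > c * (y - x)"
proof -
  have "((\<lambda>y. f y - c * y) has_real_derivative D - c) (at x)"
    using assms(1) by (auto intro!: derivative_eq_intros)
  moreover have "0 < D - c" using assms(2) by simp
  ultimately obtain d where "d > 0" and d: "\<forall>h>0. h < d \<longrightarrow> f x - c * x < f (x + h) - c * (x + h)"
    by (blast dest: DERIV_pos_inc_right)
  show ?thesis using d[rule_format, of "d/2"] \<open>d > 0\<close> by (intro exI[of _ "x + d/2"]) (auto simp: algebra_simps)
qed

section \<open>Liminf of bounded real sequences\<close>

lemma liminf_ereal_eq_real:
  fixes g :: "nat \<Rightarrow> real"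
  assumes "\<forall>\<^sub>F m in sequentially. a \<le> g m \<and> g m \<le> c"
  shows "liminf (\<lambda>m. ereal (g m)) = ereal (real_of_ereal (liminf (\<lambda>m. ereal (g m))))"
proof -
  have "ereal a \<le> liminf (\<lambda>m. ereal (g m))"
    by (rule Liminf_bounded) (use assms in \<open>auto elim: eventually_mono\<close>)
  moreover have "liminf (\<lambda>m. ereal (g m)) \<le> ereal c"
    by (rule Liminf_le) (use assms in \<open>auto elim: eventually_mono\<close>)
  ultimately show ?thesis by (cases "liminf (\<lambda>m. ereal (g m))") auto
qed

lemma eventually_gt_real_liminf:
  fixes g :: "nat \<Rightarrow> real"
  assumes "\<forall>\<^sub>F m in sequentially. a \<le> g m \<and> g m \<le> c" "\<delta> > 0"
  shows "\<forall>\<^sub>F m in sequentially. g m > real_of_ereal (liminf (\<lambda>m. ereal (g m))) - \<delta>"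
proof -
  have "ereal (real_of_ereal (liminf (\<lambda>m. ereal (g m))) - \<delta>) < liminf (\<lambda>m. ereal (g m))"
    using assms(2) by (subst (2) liminf_ereal_eq_real[OF assms(1)]) simp
  then show ?thesis by (auto dest: less_LiminfD elim: eventually_mono)
qed

lemma concave_on_real_liminf:
  fixes f :: "nat \<Rightarrow> real \<Rightarrow> real" and S :: "real set"
  assumes concave: "\<And>m. concave_on S (f m)"
    and bounded: "\<And>x. x \<in> S \<Longrightarrow> \<exists>c. \<forall>\<^sub>F m in sequentially. 0 \<le> f m x \<and> f m x \<le> c"
  shows "concave_on S (\<lambda>x. real_of_ereal (liminf (\<lambda>m. ereal (f m x))))"
proof -
  define \<Lambda> where "\<Lambda> = (\<lambda>x. real_of_ereal (liminf (\<lambda>m. ereal (f m x))))"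
  have liminf_eq: "liminf (\<lambda>m. ereal (f m x)) = ereal (\<Lambda> x)" if x: "x \<in> S" for x
  proof -
    obtain c where "\<forall>\<^sub>F m in sequentially. 0 \<le> f m x \<and> f m x \<le> c" using bounded[OF x] ..
    then show ?thesis unfolding \<Lambda>_def by (rule liminf_ereal_eq_real)
  qed
  have "u * \<Lambda> x + v * \<Lambda> y \<le> \<Lambda> (u * x + v * y)"
    if "x \<in> S" "y \<in> S" "u \<ge> 0" "v \<ge> 0" "u + v = 1" for x y u v
  proof -
    have "u * x + v * y \<in> S"
      using concave_on_imp_convex[OF concave] that by (simp add: convex_def)
    have nonneg: "\<forall>\<^sub>F m in sequentially. 0 \<le> ereal w * ereal (f m z)" if "z \<in> S" "w \<ge> 0" for z w
      using bounded[OF \<open>z \<in> S\<close>] \<open>w \<ge> 0\<close> by (auto elim: eventually_mono)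
    have "ereal (u * \<Lambda> x + v * \<Lambda> y)
        = ereal u * liminf (\<lambda>m. ereal (f m x)) + ereal v * liminf (\<lambda>m. ereal (f m y))"
      using that by (simp add: liminf_eq)
    also have "\<dots> = liminf (\<lambda>m. ereal u * ereal (f m x)) + liminf (\<lambda>m. ereal v * ereal (f m y))"
      using that by (subst (1 2) Liminf_ereal_mult_left) auto
    also have "\<dots> \<le> liminf (\<lambda>m. ereal u * ereal (f m x) + ereal v * ereal (f m y))"
      using that by (intro Liminf_add_le nonneg) auto
    also have "\<dots> \<le> liminf (\<lambda>m. ereal (f m (u * x + v * y)))"
      using concave that unfolding concave_on_iff by (intro Liminf_mono always_eventually) simp
    finally show ?thesis using liminf_eq[OF \<open>u * x + v * y \<in> S\<close>] by simp
  qed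
  then have "concave_on S \<Lambda>"
    using concave_on_imp_convex[OF concave] unfolding concave_on_iff by simp
  then show ?thesis unfolding \<Lambda>_def .
qed

section \<open>Measures of bounded support\<close>

definition tau_seq :: "real measure \<Rightarrow> nat \<Rightarrow> real \<Rightarrow> real" where
  "tau_seq \<mu> m q = - (1 / real m) * log 2 (moment_sum \<mu> q m)"

lemma tau_eq_liminf_tau_seq: "tau \<mu> q = real_of_ereal (liminf (\<lambda>m. ereal (tau_seq \<mu> m q)))"
  unfolding tau_def tau_seq_def ..

locale bounded_support = prob_space \<mu> for \<mu> :: "real measure" +
  fixes R :: real
  assumes sets_borel: "sets \<mu> = sets borel"
    and support: "measure \<mu> {-R..R} = 1"
begin

definition charged :: "nat \<Rightarrow> real set set" where
  "charged m = {J \<in> dyadics m. measure \<mu> J > 0}"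

definition covering_indices :: "nat \<Rightarrow> int set" where
  "covering_indices m = {\<lfloor>-R * 2^m\<rfloor> .. \<lfloor>R * 2^m\<rfloor>}"

lemma moment_sum_charged: "moment_sum \<mu> q m = (\<Sum>J\<in>charged m. measure \<mu> J powr q)"
  unfolding moment_sum_def charged_def ..

lemma R_nonneg: "R \<ge> 0"
  using support by (cases "R \<ge> 0") auto

lemma measure_outside_support:
  assumes "J \<inter> {-R..R} = {}" shows "measure \<mu> J = 0"
proof -
  have "space \<mu> = UNIV" using sets_eq_imp_space_eq[OF sets_borel] by simp
  then have "J \<subseteq> space \<mu> - {-R..R}" using assms by auto
  moreover have "prob (space \<mu> - {-R..R}) = 0"
    using prob_compl[of "{-R..R}"] support sets_borel by simp
  ultimately have "measure \<mu> J \<le> 0" if "J \<in> sets \<mu>"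
    using finite_measure_mono sets.compl_sets sets_borel by (metis atLeastAtMost_borel)
  then show ?thesis using measure_notin_sets measure_nonneg by (metis order_antisym)
qed

lemma covering_indices_cover: "{-R..R} \<subseteq> (\<Union>j\<in>covering_indices m. dyadic m j)"
proof
  fix x assume "x \<in> {-R..R}"
  then have "\<lfloor>x * 2^m\<rfloor> \<in> covering_indices m"
    unfolding covering_indices_def by (intro dyadic_index_bounds[OF mem_dyadic_floor]) auto
  then show "x \<in> (\<Union>j\<in>covering_indices m. dyadic m j)" using mem_dyadic_floor by blast
qed

lemma charged_subset: "charged m \<subseteq> dyadic m ` covering_indices m"
proof
  fix J assume "J \<in> charged m"
  then obtain j where J: "J = dyadic m j" "measure \<mu> J > 0" unfolding charged_def dyadics_def by auto
  then have "J \<inter> {-R..R} \<noteq> {}" using measure_outside_support by auto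
  then obtain x where "x \<in> dyadic m j" "\<bar>x\<bar> \<le> R" using J by fastforce
  then show "J \<in> dyadic m ` covering_indices m"
    using J dyadic_index_bounds unfolding covering_indices_def by blast
qed

lemma finite_charged: "finite (charged m)"
  using charged_subset finite_subset unfolding covering_indices_def by blast

lemma card_charged_le: "real (card (charged m)) \<le> (2*R + 2) * 2^m"
proof -
  have "\<lfloor>-R * 2^m\<rfloor> \<le> \<lfloor>R * 2^m\<rfloor>" using R_nonneg by (intro floor_mono) simp
  then have "real (card (covering_indices m)) = real_of_int (\<lfloor>R * 2^m\<rfloor> - \<lfloor>-R * 2^m\<rfloor> + 1)"
    unfolding covering_indices_def by simp
  also have "\<dots> \<le> 2*R * 2^m + 2" by linarith
  also have "\<dots> \<le> (2*R + 2) * 2^m" by (simp add: algebra_simps)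
  finally have "real (card (covering_indices m)) \<le> (2*R + 2) * 2^m" .
  moreover have "card (charged m) \<le> card (covering_indices m)"
    using card_mono[OF _ charged_subset] card_image_le le_trans
    unfolding covering_indices_def by blast
  ultimately show ?thesis by linarith
qed

lemma dyadic_in_sets: "dyadic m j \<in> sets \<mu>"
  unfolding sets_borel dyadic_def by simp

lemma sum_measure_charged: "(\<Sum>J\<in>charged m. measure \<mu> J) = 1"
proof -
  let ?I = "covering_indices m"
  have fin: "finite ?I" unfolding covering_indices_def by simp
  have "(\<Sum>J\<in>charged m. measure \<mu> J) = (\<Sum>J\<in>dyadic m ` ?I. measure \<mu> J)"
  proof (rule sum.mono_neutral_left)
    show "\<forall>J\<in>dyadic m ` ?I - charged m. measure \<mu> J = 0"
    proof
      fix J assume "J \<in> dyadic m ` ?I - charged m"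
      then have "\<not> measure \<mu> J > 0" unfolding charged_def dyadics_def by auto
      then show "measure \<mu> J = 0" using measure_nonneg[of \<mu> J] by linarith
    qed
  qed (simp_all add: fin charged_subset)
  also have "\<dots> = (\<Sum>j\<in>?I. measure \<mu> (dyadic m j))"
    using inj_dyadic by (simp add: sum.reindex inj_on_def inj_def)
  also have "\<dots> = measure \<mu> (\<Union>j\<in>?I. dyadic m j)"
  proof (rule measure_finite_Union[symmetric])
    show "disjoint_family_on (dyadic m) ?I"
      using disjoint_dyadic unfolding disjoint_family_on_def by blast
  qed (simp_all add: fin dyadic_in_sets image_subset_iff emeasure_finite)
  also have "\<dots> = 1"
  proof (rule antisym)
    have "(\<Union>j\<in>?I. dyadic m j) \<in> sets \<mu>"
      using fin dyadic_in_sets by blast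
    then show "1 \<le> measure \<mu> (\<Union>j\<in>?I. dyadic m j)"
      using finite_measure_mono[OF covering_indices_cover] support by simp
  qed simp
  finally show ?thesis .
qed

lemma charged_nonempty: "charged m \<noteq> {}"
  using sum_measure_charged[of m] by auto

lemma exists_heavy_charged: "\<exists>J\<in>charged m. measure \<mu> J \<ge> 1 / card (charged m)"
proof (rule ccontr)
  assume "\<not> ?thesis"
  then have "(\<Sum>J\<in>charged m. measure \<mu> J) < (\<Sum>J\<in>charged m. 1 / card (charged m))"
    using finite_charged charged_nonempty by (intro sum_strict_mono) auto
  then show False using sum_measure_charged finite_charged charged_nonempty by simp
qed

lemma moment_sum_pos: "moment_sum \<mu> q m > 0"
  unfolding moment_sum_charged using finite_charged charged_nonempty
  by (intro sum_pos) (auto simp: charged_def)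

lemma moment_sum_le_1:
  assumes "q \<ge> 1" shows "moment_sum \<mu> q m \<le> 1"
proof -
  have "moment_sum \<mu> q m \<le> (\<Sum>J\<in>charged m. measure \<mu> J)"
    unfolding moment_sum_charged using assms
    by (intro sum_mono) (auto simp: charged_def intro: powr_le_one_le)
  then show ?thesis using sum_measure_charged by simp
qed

lemma moment_sum_ge:
  assumes "q > 0" shows "moment_sum \<mu> q m \<ge> (1 / card (charged m)) powr q"
proof -
  obtain J where J: "J \<in> charged m" "measure \<mu> J \<ge> 1 / card (charged m)"
    using exists_heavy_charged by blast
  have "(1 / card (charged m)) powr q \<le> measure \<mu> J powr q"
    using J assms by (intro powr_mono2) auto
  also have "\<dots> \<le> moment_sum \<mu> q m"
    unfolding moment_sum_charged using J finite_charged by (intro member_le_sum) auto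
  finally show ?thesis .
qed

lemma tau_seq_nonneg:
  assumes "q \<ge> 1" shows "tau_seq \<mu> m q \<ge> 0"
proof -
  have "log 2 (moment_sum \<mu> q m) \<le> 0" using moment_sum_pos moment_sum_le_1[OF assms] by simp
  then show ?thesis unfolding tau_seq_def by (simp add: divide_nonpos_nonneg)
qed

lemma tau_seq_le:
  assumes "q > 0" "m \<ge> 1" shows "tau_seq \<mu> m q \<le> q * (log 2 (2*R + 2) + 1)"
proof -
  define N where "N = real (card (charged m))"
  have "N \<ge> 1" unfolding N_def using charged_nonempty finite_charged
    by (simp add: Suc_leI card_gt_0_iff)
  have "log 2 N \<le> log 2 ((2*R + 2) * 2^m)"
    using \<open>N \<ge> 1\<close> card_charged_le unfolding N_def by (intro log_mono) auto
  also have "\<dots> = log 2 (2*R + 2) + m" using R_nonneg by (simp add: log_mult log_nat_power)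
  finally have log_N: "log 2 N \<le> log 2 (2*R + 2) + m" .
  have "- q * log 2 N = log 2 ((1/N) powr q)" using \<open>N \<ge> 1\<close> by (simp add: log_powr log_divide)
  also have "\<dots> \<le> log 2 (moment_sum \<mu> q m)"
    using moment_sum_ge[OF assms(1)] moment_sum_pos \<open>N \<ge> 1\<close> unfolding N_def by simp
  finally have "tau_seq \<mu> m q \<le> q * log 2 N / m"
    unfolding tau_seq_def using assms(2) by (simp add: field_simps)
  also have "\<dots> \<le> q * (log 2 (2*R + 2) + m) / m"
    using log_N assms by (intro divide_right_mono mult_left_mono) auto
  also have "\<dots> = q * (log 2 (2*R + 2) / m + 1)"
    using assms(2) by (simp add: field_simps)
  also have "\<dots> \<le> q * (log 2 (2*R + 2) / 1 + 1)"
    using assms R_nonneg by (intro mult_left_mono add_right_mono divide_left_mono) auto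
  finally show ?thesis by simp
qed

lemma tau_seq_bounded:
  assumes "q \<ge> 1"
  shows "\<forall>\<^sub>F m in sequentially. 0 \<le> tau_seq \<mu> m q \<and> tau_seq \<mu> m q \<le> q * (log 2 (2*R + 2) + 1)"
  using assms by (intro eventually_sequentiallyI[of 1]) (auto intro: tau_seq_nonneg tau_seq_le)

lemma tau_le:
  assumes "q > 0" shows "tau \<mu> q \<le> q * (log 2 (2*R + 2) + 1)"
proof -
  have "liminf (\<lambda>m. ereal (tau_seq \<mu> m q)) \<le> ereal (q * (log 2 (2*R + 2) + 1))"
    using tau_seq_le[OF assms] by (intro Liminf_le eventually_sequentiallyI[of 1]) auto
  moreover have "q * (log 2 (2*R + 2) + 1) \<ge> 0" using assms R_nonneg by simp
  ultimately show ?thesis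
    unfolding tau_eq_liminf_tau_seq by (cases "liminf (\<lambda>m. ereal (tau_seq \<mu> m q))") auto
qed

lemma concave_on_tau_seq: "concave_on UNIV (tau_seq \<mu> m)"
proof -
  have "u * tau_seq \<mu> m x + v * tau_seq \<mu> m y \<le> tau_seq \<mu> m (u * x + v * y)"
    if "u \<ge> 0" "v \<ge> 0" "u + v = 1" for x y u v
  proof -
    have "moment_sum \<mu> (u * x + v * y) m \<le> moment_sum \<mu> x m powr u * moment_sum \<mu> y m powr v"
      unfolding moment_sum_charged using finite_charged charged_nonempty that
      by (intro sum_powr_log_convex) (auto simp: charged_def)
    then have "log 2 (moment_sum \<mu> (u * x + v * y) m)
        \<le> log 2 (moment_sum \<mu> x m powr u * moment_sum \<mu> y m powr v)"
      using moment_sum_pos by (intro log_mono) auto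
    also have "\<dots> = u * log 2 (moment_sum \<mu> x m) + v * log 2 (moment_sum \<mu> y m)"
      using moment_sum_pos[of x m] moment_sum_pos[of y m] by (simp add: log_mult log_powr)
    finally have "log 2 (moment_sum \<mu> (u * x + v * y) m)
        \<le> u * log 2 (moment_sum \<mu> x m) + v * log 2 (moment_sum \<mu> y m)" .
    then have "- (1 / m) * (u * log 2 (moment_sum \<mu> x m) + v * log 2 (moment_sum \<mu> y m))
        \<le> - (1 / m) * log 2 (moment_sum \<mu> (u * x + v * y) m)"
      by (intro mult_left_mono_neg) auto
    then show ?thesis unfolding tau_seq_def by (simp add: algebra_simps)
  qed
  then show ?thesis unfolding concave_on_iff by simp
qed

lemma concave_on_tau: "concave_on {1..} (tau \<mu>)"
proof -
  have "concave_on {1..} (\<lambda>q. real_of_ereal (liminf (\<lambda>m. ereal (tau_seq \<mu> m q))))"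
  proof (rule concave_on_real_liminf)
    show "concave_on {1..} (tau_seq \<mu> m)" for m
      using concave_on_tau_seq unfolding concave_on_def by (rule convex_on_subset) auto
  qed (use tau_seq_bounded in auto)
  then show ?thesis unfolding tau_eq_liminf_tau_seq .
qed

lemma tau_le_tangent:
  assumes "q\<^sub>0 > 1" "(tau \<mu> has_real_derivative \<alpha>\<^sub>0) (at q\<^sub>0)" "q \<ge> 1"
  shows "tau \<mu> q \<le> tau \<mu> q\<^sub>0 + \<alpha>\<^sub>0 * (q - q\<^sub>0)"
proof -
  have "((\<lambda>q. - tau \<mu> q) has_real_derivative - \<alpha>\<^sub>0) (at q\<^sub>0 within {1..})"
    using has_field_derivative_at_within[OF DERIV_minus[OF assms(2)]] .
  moreover have "convex_on {1..} (\<lambda>q. - tau \<mu> q)"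
    using concave_on_tau unfolding concave_on_def .
  ultimately have "- tau \<mu> q - - tau \<mu> q\<^sub>0 \<ge> - \<alpha>\<^sub>0 * (q - q\<^sub>0)"
    using assms(1,3) by (intro convex_on_imp_above_tangent[where A = "{1..}"]) auto
  then show ?thesis by simp
qed

lemma tau_star_le:
  assumes "q\<^sub>0 > 1" "(tau \<mu> has_real_derivative \<alpha>\<^sub>0) (at q\<^sub>0)"
  shows "tau_star \<mu> \<alpha>\<^sub>0 \<le> \<alpha>\<^sub>0 * q\<^sub>0 - tau \<mu> q\<^sub>0"
proof -
  define K where "K = log 2 (2*R + 2) + 1"
  have "K \<ge> 0" unfolding K_def using R_nonneg by simp
  have "min (\<alpha>\<^sub>0 * q\<^sub>0 - tau \<mu> q\<^sub>0) (- \<bar>\<alpha>\<^sub>0\<bar> - K) \<le> \<alpha>\<^sub>0 * q - tau \<mu> q" if "q > 0" for q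
  proof (cases "q < 1")
    case True
    then have "\<bar>\<alpha>\<^sub>0 * q\<bar> \<le> \<bar>\<alpha>\<^sub>0\<bar>"
      using \<open>q > 0\<close> by (simp add: abs_mult mult_right_le_one_le)
    moreover have "q * K \<le> K"
      using True \<open>q > 0\<close> \<open>K \<ge> 0\<close> by (simp add: mult_left_le_one_le)
    moreover have "tau \<mu> q \<le> q * K"
      using tau_le[OF \<open>q > 0\<close>] unfolding K_def .
    ultimately show ?thesis by linarith
  next
    case False
    then show ?thesis using tau_le_tangent[OF assms, of q] by (simp add: algebra_simps)
  qed
  then have "bdd_below ((\<lambda>q. \<alpha>\<^sub>0 * q - tau \<mu> q) ` {0<..})"
    unfolding bdd_below_def by blast
  then show ?thesis unfolding tau_star_def using assms(1) by (intro cINF_lower) auto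
qed

lemma eventually_moment_sum_le:
  assumes "p \<ge> 1" "\<delta> > 0"
  shows "\<forall>\<^sub>F m in sequentially. moment_sum \<mu> p m \<le> 2 powr (- (tau \<mu> p - \<delta>) * m)"
proof -
  have "\<forall>\<^sub>F m in sequentially. tau_seq \<mu> m p > tau \<mu> p - \<delta> \<and> m \<ge> 1"
    unfolding tau_eq_liminf_tau_seq
    using eventually_gt_real_liminf[OF tau_seq_bounded[OF assms(1)] assms(2)] eventually_ge_at_top
    by (rule eventually_conj)
  then show ?thesis
  proof (rule eventually_mono)
    fix m assume m: "tau_seq \<mu> m p > tau \<mu> p - \<delta> \<and> m \<ge> 1"
    moreover from m have "real m > 0" by simp
    ultimately have "log 2 (moment_sum \<mu> p m) < - (tau \<mu> p - \<delta>) * m"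
      unfolding tau_seq_def by (simp add: field_simps)
    then show "moment_sum \<mu> p m \<le> 2 powr (- (tau \<mu> p - \<delta>) * m)"
      using moment_sum_pos by (simp add: log_less_iff less_imp_le)
  qed
qed

lemma sum_powr_dyadic_le:
  assumes "D \<subseteq> dyadics m" "finite D" "q \<ge> 0" "h \<ge> 0"
    and "card D \<le> 2 powr (c * m)" and "moment_sum \<mu> (q + h) m \<le> 2 powr (- b * m)"
  shows "(\<Sum>J\<in>D. measure \<mu> J powr q) \<le> 2 powr ((c - a * q) * m) + 2 powr ((a * h - b) * m)"
proof -
  define t where "t = 2 powr (- a * m)"
  have "(\<Sum>J\<in>{J\<in>D. measure \<mu> J > 0}. measure \<mu> J powr (q + h)) \<le> moment_sum \<mu> (q + h) m"
    unfolding moment_sum_charged using assms(1) finite_charged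
    by (intro sum_mono2) (auto simp: charged_def)
  then have "t powr (-h) * (\<Sum>J\<in>{J\<in>D. measure \<mu> J > 0}. measure \<mu> J powr (q + h))
      \<le> t powr (-h) * 2 powr (- b * m)"
    using assms(6) by (intro mult_left_mono) auto
  moreover have "card D * t powr q \<le> 2 powr (c * m) * t powr q"
    using assms(5) by (intro mult_right_mono) auto
  moreover have "(\<Sum>J\<in>D. measure \<mu> J powr q)
      \<le> card D * t powr q + t powr (-h) * (\<Sum>J\<in>{J\<in>D. measure \<mu> J > 0}. measure \<mu> J powr (q + h))"
    using assms(2-4) unfolding t_def by (intro sum_powr_split_at_threshold) auto
  ultimately have "(\<Sum>J\<in>D. measure \<mu> J powr q) \<le> 2 powr (c * m) * t powr q + t powr (-h) * 2 powr (- b * m)"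
    by linarith
  also have "\<dots> = 2 powr ((c - a * q) * m) + 2 powr ((a * h - b) * m)"
    unfolding t_def by (simp add: powr_powr powr_add[symmetric] algebra_simps)
  finally show ?thesis .
qed

lemma small_families_gain:
  assumes q\<^sub>0: "q\<^sub>0 > 1" and deriv: "(tau \<mu> has_real_derivative \<alpha>\<^sub>0) (at q\<^sub>0)" and "\<kappa> > 0"
  shows "\<exists>\<epsilon>>0. \<forall>\<^sub>F m in sequentially.
           \<forall>D'. D' \<subseteq> dyadics m \<and> finite D' \<and>
                real (card D') \<le> 2 powr ((tau_star \<mu> \<alpha>\<^sub>0 - \<kappa>) * real m) \<longrightarrow>
                (\<Sum>J\<in>D'. measure \<mu> J powr q\<^sub>0) \<le> 2 powr (- (tau \<mu> q\<^sub>0 + \<epsilon>) * real m)"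
proof -
  define \<eta> where "\<eta> = \<kappa> / (2 * q\<^sub>0)"
  have "\<eta> > 0" "\<eta> * q\<^sub>0 = \<kappa> / 2" unfolding \<eta>_def using \<open>\<kappa> > 0\<close> q\<^sub>0 by auto
  obtain p where "p > q\<^sub>0" and secant: "tau \<mu> p - tau \<mu> q\<^sub>0 > (\<alpha>\<^sub>0 - \<eta>/2) * (p - q\<^sub>0)"
    using DERIV_exists_secant_above[OF deriv, of "\<alpha>\<^sub>0 - \<eta>/2"] \<open>\<eta> > 0\<close> by auto
  define h \<delta> e where "h = p - q\<^sub>0" and "\<delta> = \<eta> * h / 4" and "e = min (\<kappa>/2) \<delta>"
  have "h > 0" "\<delta> > 0" "e > 0" "e \<le> \<kappa>/2" "e \<le> \<delta>"
    unfolding h_def \<delta>_def e_def using \<open>p > q\<^sub>0\<close> \<open>\<eta> > 0\<close> \<open>\<kappa> > 0\<close> by auto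
  have exponent_small: "tau_star \<mu> \<alpha>\<^sub>0 - \<kappa> - (\<alpha>\<^sub>0 - \<eta>) * q\<^sub>0 \<le> - (tau \<mu> q\<^sub>0 + e/2) - e/2"
    using tau_star_le[OF q\<^sub>0 deriv] \<open>\<eta> * q\<^sub>0 = \<kappa> / 2\<close> \<open>e \<le> \<kappa>/2\<close> by (simp add: algebra_simps)
  have exponent_large: "(\<alpha>\<^sub>0 - \<eta>) * h - (tau \<mu> p - \<delta>) \<le> - (tau \<mu> q\<^sub>0 + e/2) - e/2"
    using secant \<open>e \<le> \<delta>\<close> unfolding \<delta>_def h_def[symmetric] by (simp add: algebra_simps)
  have "\<forall>\<^sub>F m in sequentially. moment_sum \<mu> (q\<^sub>0 + h) m \<le> 2 powr (- (tau \<mu> p - \<delta>) * m) \<and> 1 \<le> e/2 * m"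
  proof (rule eventually_conj)
    show "\<forall>\<^sub>F m in sequentially. moment_sum \<mu> (q\<^sub>0 + h) m \<le> 2 powr (- (tau \<mu> p - \<delta>) * m)"
      using eventually_moment_sum_le[of p \<delta>] \<open>p > q\<^sub>0\<close> q\<^sub>0 \<open>\<delta> > 0\<close> unfolding h_def by simp
    show "\<forall>\<^sub>F m in sequentially. 1 \<le> e/2 * m"
      using filterlim_real_sequentially \<open>e > 0\<close> unfolding filterlim_at_top
      by (auto simp: field_simps elim!: allE[of _ "2/e"] eventually_mono)
  qed
  then have "\<forall>\<^sub>F m in sequentially.
           \<forall>D'. D' \<subseteq> dyadics m \<and> finite D' \<and>
                real (card D') \<le> 2 powr ((tau_star \<mu> \<alpha>\<^sub>0 - \<kappa>) * real m) \<longrightarrow>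
                (\<Sum>J\<in>D'. measure \<mu> J powr q\<^sub>0) \<le> 2 powr (- (tau \<mu> q\<^sub>0 + e/2) * real m)"
  proof (rule eventually_mono, intro allI impI)
    fix m D' assume m: "moment_sum \<mu> (q\<^sub>0 + h) m \<le> 2 powr (- (tau \<mu> p - \<delta>) * m) \<and> 1 \<le> e/2 * m"
      and D': "D' \<subseteq> dyadics m \<and> finite D' \<and> real (card D') \<le> 2 powr ((tau_star \<mu> \<alpha>\<^sub>0 - \<kappa>) * real m)"
    have "(\<Sum>J\<in>D'. measure \<mu> J powr q\<^sub>0)
        \<le> 2 powr ((tau_star \<mu> \<alpha>\<^sub>0 - \<kappa> - (\<alpha>\<^sub>0 - \<eta>) * q\<^sub>0) * m) + 2 powr (((\<alpha>\<^sub>0 - \<eta>) * h - (tau \<mu> p - \<delta>)) * m)"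
      using m D' q\<^sub>0 \<open>h > 0\<close> by (intro sum_powr_dyadic_le) auto
    also have "\<dots> \<le> 2 powr (- (tau \<mu> q\<^sub>0 + e/2) * m)"
      using exponent_small exponent_large m by (intro two_powr_add_le[where e = "e/2"]) auto
    finally show "(\<Sum>J\<in>D'. measure \<mu> J powr q\<^sub>0) \<le> 2 powr (- (tau \<mu> q\<^sub>0 + e/2) * real m)" .
  qed
  then show ?thesis using \<open>e > 0\<close> by (intro exI[of _ "e/2"]) auto
qed

end

theorem lemma3p9:
  fixes \<mu> :: "real measure" and q\<^sub>0 \<alpha>\<^sub>0 :: real
  assumes "prob_space \<mu>"
    and "sets \<mu> = sets borel"
    and "\<exists>R. measure \<mu> {-R..R} = 1"
    and "q\<^sub>0 > 1"
    and "(tau \<mu> has_real_derivative \<alpha>\<^sub>0) (at q\<^sub>0)"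
  shows "\<forall>\<kappa>>0. \<exists>\<epsilon>>0. \<forall>\<^sub>F m in sequentially.
           \<forall>D'. D' \<subseteq> dyadics m \<and> finite D' \<and>
                real (card D') \<le> 2 powr ((tau_star \<mu> \<alpha>\<^sub>0 - \<kappa>) * real m) \<longrightarrow>
                (\<Sum>J\<in>D'. measure \<mu> J powr q\<^sub>0) \<le> 2 powr (- (tau \<mu> q\<^sub>0 + \<epsilon>) * real m)"
proof (intro allI impI)
  fix \<kappa> :: real assume "\<kappa> > 0"
  obtain R where "measure \<mu> {-R..R} = 1" using assms(3) ..
  then interpret bounded_support \<mu> R
    using assms(1,2) by (simp add: bounded_support_def bounded_support_axioms_def)
  show "\<exists>\<epsilon>>0. \<forall>\<^sub>F m in sequentially.
           \<forall>D'. D' \<subseteq> dyadics m \<and> finite D' \<and>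
                real (card D') \<le> 2 powr ((tau_star \<mu> \<alpha>\<^sub>0 - \<kappa>) * real m) \<longrightarrow>
                (\<Sum>J\<in>D'. measure \<mu> J powr q\<^sub>0) \<le> 2 powr (- (tau \<mu> q\<^sub>0 + \<epsilon>) * real m)"
    using small_families_gain[OF assms(4,5) \<open>\<kappa> > 0\<close>] .
qed

end
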